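(* Let $s,k$ be positive integers and let $n\ge3(s+1)k-1$. Let $\mathcal F\subset\binom{[n]}{k}$ be a family such that for every $A\in\mathcal F$ there is a positive integer $\ell$ with $|A\cap[3(s+1)\ell-1]|\ge\ell$. Then $$(3s+2)\,|\partial\mathcal F|\ge|\mathcal F|.$$
   Context: $[m]=\{1,\ldots,m\}$; $\binom{X}{k}$ is the family of all $k$-subsets of $X$. For $\mathcal F\subset\binom{[n]}{k}$, its (lower) shadow is $\partial\mathcal F:=\bigcup_{F\in\mathcal F}\binom{F}{k-1}$. *)

theory Defs
  imports Main
begin

definition shadow :: "nat \<Rightarrow> nat set set \<Rightarrow> nat set set" where
  "shadow k \<F> = (\<Union>F\<in>\<F>. {G. G \<subseteq> F \<and> card G = k - 1})"

end

theory Submission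
  imports Defs
begin

text \<open>With \<open>m = 3(s+1)\<close>, walk along a set \<open>A\<close> of positive integers, taking a step of
  \<open>-m\<close> at each element: at \<open>x \<in> A\<close> the walk is at \<open>x - m |A \<inter> [1,x]|\<close>. The hypothesis on
  \<open>A\<close> makes its minimum negative. Map \<open>A\<close> to \<open>A - {x}\<close>, where \<open>x\<close> is the leftmost minimiser.
  If \<open>G \<union> {x}\<close> and \<open>G \<union> {x'}\<close> with \<open>x < x'\<close> both lie in the fibre over \<open>G\<close>, their minima
  satisfy \<open>\<mu> < \<mu>' \<le> \<mu> + m - 2\<close>, so a fibre has at most \<open>m - 1 = 3s + 2\<close> members.\<close>

lemma
  assumes "finite A" "a \<in> A" "a < t"
  shows Max_below_in: "Max {y\<in>A. y < t} \<in> A"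
    and Max_below_less: "Max {y\<in>A. y < t} < t"
    and le_Max_below_eq: "{y\<in>A. y \<le> Max {y\<in>A. y < t}} = {y\<in>A. y < t}"
proof -
  have "Max {y\<in>A. y < t} \<in> {y\<in>A. y < t}"
    using assms by (intro Max_in) auto
  moreover have "y \<le> Max {y\<in>A. y < t}" if "y \<in> A" "y < t" for y
    using assms(1) that by (intro Max_ge) auto
  ultimately show "Max {y\<in>A. y < t} \<in> A" "Max {y\<in>A. y < t} < t"
    "{y\<in>A. y \<le> Max {y\<in>A. y < t}} = {y\<in>A. y < t}" by fastforce+
qed

lemma card_le_if_diameter_le:
  fixes S :: "int set"
  assumes "\<And>a b. a \<in> S \<Longrightarrow> b \<in> S \<Longrightarrow> b \<le> a + d"
  shows "card S \<le> nat (d + 1)"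
proof (cases "S = {}")
  case False
  then obtain a where "a \<in> S" by auto
  have "S \<subseteq> {a - d..a + d}" using assms[OF \<open>a \<in> S\<close>] assms[OF _ \<open>a \<in> S\<close>] by force
  then have "finite S" by (rule finite_subset) simp
  moreover have "Min S \<in> S" using \<open>finite S\<close> False by simp
  ultimately have "S \<subseteq> {Min S..Min S + d}" using assms[OF \<open>Min S \<in> S\<close>] by auto
  then have "card S \<le> card {Min S..Min S + d}" by (intro card_mono) simp_all
  then show ?thesis by simp
qed simp

lemma card_le_mult_card_if_fibres_le:
  assumes "f ` A \<subseteq> B" "finite B" "\<And>y. y \<in> B \<Longrightarrow> card {x\<in>A. f x = y} \<le> c"
  shows "card A \<le> c * card B"
proof -
  have "A = (\<Union>y\<in>B. {x\<in>A. f x = y})" using assms(1) by auto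
  then have "card A \<le> (\<Sum>y\<in>B. card {x\<in>A. f x = y})"
    using card_UN_le[OF assms(2)] by metis
  also have "\<dots> \<le> (\<Sum>y\<in>B. c)" using assms(3) by (rule sum_mono)
  finally show ?thesis by (simp add: mult.commute)
qed

lemma finite_shadow:
  assumes "finite \<F>" "\<And>A. A \<in> \<F> \<Longrightarrow> finite A"
  shows "finite (shadow k \<F>)"
proof (rule finite_subset)
  show "shadow k \<F> \<subseteq> \<Union> (Pow ` \<F>)" unfolding shadow_def by auto
  show "finite (\<Union> (Pow ` \<F>))" using assms by simp
qed

definition walk :: "nat \<Rightarrow> nat set \<Rightarrow> nat \<Rightarrow> int" where
  "walk m A x = int x - int m * int (card {y\<in>A. y \<le> x})"

definition walk_min :: "nat \<Rightarrow> nat set \<Rightarrow> int" where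
  "walk_min m A = Min (walk m A ` A)"

definition pivot :: "nat \<Rightarrow> nat set \<Rightarrow> nat" where
  "pivot m A = Min {x\<in>A. walk m A x = walk_min m A}"

lemma walk_min_le:
  assumes "finite A" "x \<in> A"
  shows "walk_min m A \<le> walk m A x"
  using assms unfolding walk_min_def by simp

lemma
  assumes "finite A" "A \<noteq> {}"
  shows pivot_in: "pivot m A \<in> A"
    and walk_pivot: "walk m A (pivot m A) = walk_min m A"
    and walk_min_less_below_pivot: "\<And>x. x \<in> A \<Longrightarrow> x < pivot m A \<Longrightarrow> walk_min m A < walk m A x"
proof -
  let ?P = "{x\<in>A. walk m A x = walk_min m A}"
  have "walk_min m A \<in> walk m A ` A"
    unfolding walk_min_def using assms by simp
  then have "?P \<noteq> {}" by auto
  moreover have "finite ?P" using assms by simp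
  ultimately have "pivot m A \<in> ?P"
    unfolding pivot_def by (intro Min_in)
  then show "pivot m A \<in> A" "walk m A (pivot m A) = walk_min m A" by auto
  fix x assume "x \<in> A" "x < pivot m A"
  then have "x \<notin> ?P"
    using \<open>finite ?P\<close> unfolding pivot_def by (metis (no_types, lifting) Min_le not_le)
  then show "walk_min m A < walk m A x"
    using \<open>x \<in> A\<close> walk_min_le[OF assms(1), of x m] by auto
qed

lemma walk_min_neg:
  assumes "finite A" "0 \<notin> A" "1 \<le> l" "l \<le> card (A \<inter> {1..m * l - 1})"
  shows "walk_min m A < 0"
proof -
  let ?S = "A \<inter> {1..m * l - 1}"
  have S: "?S = {y\<in>A. y < m * l}" using assms(2) by (auto simp: Suc_le_eq less_diff_conv2 intro: gr0I)
  have "?S \<noteq> {}" using assms(3,4) by auto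
  then obtain a where "a \<in> A" "a < m * l" unfolding S by auto
  define z where "z = Max {y\<in>A. y < m * l}"
  have z: "z \<in> A" "z < m * l" "{y\<in>A. y \<le> z} = ?S"
    using Max_below_in[of A a "m * l"] Max_below_less[of A a "m * l"]
      le_Max_below_eq[of A a "m * l"] assms(1) S \<open>a \<in> A\<close> \<open>a < m * l\<close> unfolding z_def by auto
  have "int z < int m * int l" using z(2) by (metis of_nat_less_iff of_nat_mult)
  moreover have "int m * int l \<le> int m * int (card ?S)"
    using assms(4) by (intro mult_left_mono) simp_all
  ultimately have "walk m A z < 0" using z(3) by (simp add: walk_def)
  then show ?thesis using walk_min_le[OF assms(1) z(1), of m] by simp
qed

lemma walk_min_less_if_pivot_less:
  assumes "finite G" "x \<notin> G" "x < x'" "pivot m (insert x' G) = x'"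
  shows "walk_min m (insert x G) < walk_min m (insert x' G)"
proof -
  let ?T = "{y\<in>G. y < x'}"
  define z where "z = Max {y\<in>insert x G. y < x'}"
  have z: "z \<in> insert x G" "z < x'" "{y\<in>insert x G. y \<le> z} = insert x ?T"
    using Max_below_in[of "insert x G" x x'] Max_below_less[of "insert x G" x x']
      le_Max_below_eq[of "insert x G" x x'] assms(1,3) unfolding z_def by auto
  have "walk_min m (insert x G) \<le> walk m (insert x G) z"
    using walk_min_le assms(1) z(1) by simp
  also have "\<dots> < walk m (insert x' G) x'"
  proof -
    have "{y\<in>insert x' G. y \<le> x'} = insert x' ?T" by auto
    then show ?thesis using z(2,3) assms(1,2) by (simp add: walk_def)
  qed
  also have "\<dots> = walk_min m (insert x' G)"
    using walk_pivot[of "insert x' G" m] assms(1,4) by simp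
  finally show ?thesis .
qed

lemma walk_min_le_add_if_pivot_less:
  assumes "finite G" "x \<notin> G" "0 < x" "x < x'"
    and "pivot m (insert x G) = x" "pivot m (insert x' G) = x'"
    and "walk_min m (insert x' G) < 0"
  shows "walk_min m (insert x' G) \<le> walk_min m (insert x G) + int m - 2"
proof (cases "\<exists>w\<in>G. w < x")
  case False
  then have "{y\<in>insert x G. y \<le> x} = {x}" by force
  then have "walk_min m (insert x G) = int x - int m"
    using walk_pivot[of "insert x G" m] assms(1,5) by (simp add: walk_def)
  then show ?thesis using assms(3,7) by simp
next
  case True
  let ?E = "{y\<in>G. y < x}"
  define w where "w = Max ?E"
  have w: "w \<in> G" "w < x" "{y\<in>G. y \<le> w} = ?E"
    using True Max_below_in[of G _ x] Max_below_less[of G _ x] le_Max_below_eq[of G _ x]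
      assms(1) unfolding w_def by auto
  have "{y\<in>insert x' G. y \<le> w} = {y\<in>G. y \<le> w}" using w(2) assms(4) by auto
  then have "walk m (insert x' G) w = int w - int m * int (card ?E)"
    using w(3) by (simp add: walk_def)
  moreover have "walk_min m (insert x' G) < walk m (insert x' G) w"
    using walk_min_less_below_pivot[of "insert x' G" w m] w(1,2) assms(1,4,6) by simp
  moreover have "walk_min m (insert x G) = int x - int m * (int (card ?E) + 1)"
  proof -
    have "{y\<in>insert x G. y \<le> x} = insert x ?E" by auto
    then show ?thesis
      using walk_pivot[of "insert x G" m] assms(1,2,5) by (simp add: walk_def add.commute)
  qed
  ultimately show ?thesis using w(2) by (simp add: algebra_simps)
qed

lemma walk_min_increase_in_fibre:
  assumes "finite A" "finite A'" "A \<noteq> {}" "A' \<noteq> {}" "0 \<notin> A" "walk_min m A' < 0"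
    and "A - {pivot m A} = A' - {pivot m A'}" "pivot m A < pivot m A'"
  shows "walk_min m A < walk_min m A'" "walk_min m A' \<le> walk_min m A + int m - 2"
proof -
  define G where "G = A - {pivot m A}"
  define x where "x = pivot m A"
  define x' where "x' = pivot m A'"
  have "x \<in> A" "x' \<in> A'" unfolding x_def x'_def using pivot_in assms(1-4) by auto
  then have A: "A = insert x G" "A' = insert x' G" "x \<notin> G"
    using assms(7) unfolding G_def x_def x'_def by auto
  have "finite G" "0 < x" "x < x'" "pivot m A = x" "pivot m A' = x'"
    using assms(1,5,8) \<open>x \<in> A\<close> unfolding G_def x_def x'_def by (auto intro: gr0I)
  then show "walk_min m A < walk_min m A'" "walk_min m A' \<le> walk_min m A + int m - 2"
    using walk_min_less_if_pivot_less[of G x x' m] walk_min_le_add_if_pivot_less[of G x x' m]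
      A assms(6) by simp_all
qed

lemma card_pivot_fibre_le:
  assumes "2 \<le> m" "\<And>A. A \<in> \<F> \<Longrightarrow> finite A \<and> A \<noteq> {} \<and> 0 \<notin> A \<and> walk_min m A < 0"
  shows "card {A\<in>\<F>. A - {pivot m A} = G} \<le> m - 1"
proof -
  let ?Fi = "{A\<in>\<F>. A - {pivot m A} = G}"
  have increase: "walk_min m A < walk_min m A' \<and> walk_min m A' \<le> walk_min m A + int m - 2"
    if "A \<in> ?Fi" "A' \<in> ?Fi" "pivot m A < pivot m A'" for A A'
  proof -
    have "A \<in> \<F>" "A' \<in> \<F>" "A - {pivot m A} = A' - {pivot m A'}" using that(1,2) by simp_all
    then show ?thesis
      using walk_min_increase_in_fibre[of A A' m] assms(2)[of A] assms(2)[of A'] that(3) by blast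
  qed
  have same_pivot: "A = A'" if "A \<in> ?Fi" "A' \<in> ?Fi" "pivot m A = pivot m A'" for A A'
    using pivot_in[of A m] pivot_in[of A' m] assms(2) that
    by (metis (mono_tags) insert_Diff mem_Collect_eq)
  have "inj_on (walk_min m) ?Fi"
  proof (rule inj_onI)
    fix A A' assume "A \<in> ?Fi" "A' \<in> ?Fi" "walk_min m A = walk_min m A'"
    then show "A = A'"
      using increase[of A A'] increase[of A' A] same_pivot[of A A']
      by (cases "pivot m A" "pivot m A'" rule: linorder_cases) auto
  qed
  moreover have "card (walk_min m ` ?Fi) \<le> nat (int m - 2 + 1)"
  proof (rule card_le_if_diameter_le)
    fix a b assume "a \<in> walk_min m ` ?Fi" "b \<in> walk_min m ` ?Fi"
    then obtain A A' where "A \<in> ?Fi" "A' \<in> ?Fi" "a = walk_min m A" "b = walk_min m A'"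
      by blast
    then show "b \<le> a + (int m - 2)"
      using increase[of A A'] increase[of A' A] same_pivot[of A A'] assms(1)
      by (cases "pivot m A" "pivot m A'" rule: linorder_cases) auto
  qed
  ultimately show ?thesis by (simp add: card_image)
qed

theorem card_le_mult_card_shadow:
  assumes "2 \<le> m" "finite \<F>"
    and "\<And>A. A \<in> \<F> \<Longrightarrow> finite A \<and> 0 \<notin> A \<and> card A = k"
    and "\<And>A. A \<in> \<F> \<Longrightarrow> \<exists>l\<ge>1. l \<le> card (A \<inter> {1..m * l - 1})"
  shows "card \<F> \<le> (m - 1) * card (shadow k \<F>)"
proof -
  have A: "finite A \<and> A \<noteq> {} \<and> 0 \<notin> A \<and> walk_min m A < 0" if "A \<in> \<F>" for A
    using assms(3,4)[OF that] walk_min_neg[of A _ m] by fastforce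
  show ?thesis
  proof (rule card_le_mult_card_if_fibres_le)
    show "(\<lambda>A. A - {pivot m A}) ` \<F> \<subseteq> shadow k \<F>"
      unfolding shadow_def using A assms(3) pivot_in by fastforce
    show "finite (shadow k \<F>)" using assms(3) by (intro finite_shadow[OF assms(2)]) blast
    show "card {A\<in>\<F>. A - {pivot m A} = G} \<le> m - 1" for G
      using assms(1) A by (rule card_pivot_fibre_le)
  qed
qed

theorem lemma4:
  fixes s k n :: nat and \<F> :: "nat set set"
  assumes "s \<ge> 1" and "k \<ge> 1"
    and "n \<ge> 3 * (s + 1) * k - 1"
    and "\<F> \<subseteq> {A. A \<subseteq> {1..n} \<and> card A = k}"
    and "\<forall>A\<in>\<F>. \<exists>l::nat. l \<ge> 1 \<and> card (A \<inter> {1..3 * (s + 1) * l - 1}) \<ge> l"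
  shows "(3 * s + 2) * card (shadow k \<F>) \<ge> card \<F>"
proof -
  have "finite \<F>"
    using assms(4) by (rule finite_subset) (auto intro: finite_subset[of _ "Pow {1..n}"])
  moreover have "finite A \<and> 0 \<notin> A \<and> card A = k" if "A \<in> \<F>" for A
  proof -
    have "A \<subseteq> {1..n}" "card A = k" using assms(4) that by auto
    then show ?thesis using finite_subset by fastforce
  qed
  ultimately have "card \<F> \<le> (3 * (s + 1) - 1) * card (shadow k \<F>)"
    using assms(5) by (intro card_le_mult_card_shadow) auto
  then show ?thesis by simp
qed

end
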